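(* Let $G=(V,E)$ be a graph on $V=\{1,\ldots,n\}$ and $b(\mathbf x)=\sum_{ij\in E}a_{ij}x_ix_j$ with $a_{ij}\neq 0$ for all $ij\in E$. Then $Q=\operatorname{conv}(B)$ if and only if every cycle in $G$ contains an even number of positive edges and an even number of negative edges.
   Context: An edge $ij$ is positive if $a_{ij}>0$ and negative if $a_{ij}<0$. $B=\{(\mathbf x,z)\in[0,1]^n\times\mathbb R: z=b(\mathbf x)\}$ is the graph of $b$ and $\operatorname{conv}(B)$ its convex hull. The McCormick polytopes are $P=\{(\mathbf x,\mathbf y)\in[0,1]^n\times[0,1]^{|E|}: y_{ij}\le x_i,\ y_{ij}\le x_j,\ y_{ij}\ge x_i+x_j-1\ \forall ij\in E\}$ and $Q=\{(\mathbf x,z)\in[0,1]^n\times\mathbb R:\exists\mathbf y\in[0,1]^{|E|}\text{ with }(\mathbf x,\mathbf y)\in P,\ z=\sum_{ij\in E}a_{ij}y_{ij}\}$. *)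

theory Defs
  imports "HOL-Analysis.Analysis"
begin

text \<open>Vertices are the elements of a finite type 'n (playing the role of V = {1..n});
  points x in [0,1]^n are vectors of type real^'n. Edges are 2-element vertex sets.\<close>

definition simple_graph :: "('n::finite) set set \<Rightarrow> bool" where
  "simple_graph E \<longleftrightarrow> (\<forall>e\<in>E. card e = 2)"

definition unit_box :: "(real^('n::finite)) set" where
  "unit_box = {x. \<forall>i. 0 \<le> x$i \<and> x$i \<le> 1}"

definition bilin :: "('n::finite) set set \<Rightarrow> ('n set \<Rightarrow> real) \<Rightarrow> real^'n \<Rightarrow> real" where
  "bilin E a x = (\<Sum>e\<in>E. a e * (\<Prod>i\<in>e. x$i))"

definition graphB :: "('n::finite) set set \<Rightarrow> ('n set \<Rightarrow> real) \<Rightarrow> ((real^'n) \<times> real) set" where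
  "graphB E a = {(x, z). x \<in> unit_box \<and> z = bilin E a x}"

definition mccormickP :: "('n::finite) set set \<Rightarrow> ((real^'n) \<times> ('n set \<Rightarrow> real)) set" where
  "mccormickP E = {(x, y). x \<in> unit_box \<and>
     (\<forall>e\<in>E. 0 \<le> y e \<and> y e \<le> 1 \<and> (\<forall>i\<in>e. y e \<le> x$i) \<and>
        (\<forall>i\<in>e. \<forall>j\<in>e. i \<noteq> j \<longrightarrow> x$i + x$j - 1 \<le> y e))}"

definition mccormickQ :: "('n::finite) set set \<Rightarrow> ('n set \<Rightarrow> real) \<Rightarrow> ((real^'n) \<times> real) set" where
  "mccormickQ E a = {(x, z). x \<in> unit_box \<and>
     (\<exists>y. (x, y) \<in> mccormickP E \<and> z = (\<Sum>e\<in>E. a e * y e))}"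

definition is_cycle :: "'n set set \<Rightarrow> 'n list \<Rightarrow> bool" where
  "is_cycle E vs \<longleftrightarrow> length vs \<ge> 3 \<and> distinct vs \<and>
     (\<forall>i < length vs. {vs ! i, vs ! ((i + 1) mod length vs)} \<in> E)"

definition cycle_edges :: "'n list \<Rightarrow> 'n set set" where
  "cycle_edges vs = {{vs ! i, vs ! ((i + 1) mod length vs)} | i. i < length vs}"

end

theory Submission
  imports Defs "HOL-Library.Transitive_Closure_Table"
begin

text \<open>
  By Harary's theorem on signed graphs, the parity condition says that the positive edges and
  the negative edges of \<open>G\<close> each form an edge cut: there are 2-colourings \<open>\<sigma>\<close>, \<open>\<tau>\<close> of the
  vertices such that an edge is cut by \<open>\<sigma>\<close> iff it is negative and by \<open>\<tau>\<close> iff it is positive.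

  Fix \<open>x\<close>. Over the fibre of \<open>P\<close> at \<open>x\<close>, \<open>\<Sum> a\<^sub>e y\<^sub>e\<close> is at most its value with the
  concave envelope \<open>min x\<^sub>i x\<^sub>j\<close> on positive and the convex envelope \<open>max 0 (x\<^sub>i + x\<^sub>j - 1)\<close>
  on negative edges, and at least its value with the reverse choice. Rounding \<open>x\<close> with one
  common threshold, taken in the opposite direction on one colour class of \<open>\<sigma>\<close> (resp. \<open>\<tau>\<close>),
  writes both extreme points of the fibre of \<open>Q\<close> as convex combinations of points of \<open>B\<close>.

  Conversely, the point \<open>(1/2, \<dots>, 1/2, \<Sum>\<^bsub>a\<^sub>e \<ge> 0\<^esub> a\<^sub>e/2)\<close> lies in \<open>Q\<close> and is a zero of
  an affine function that is nonnegative on \<open>B\<close>. If \<open>Q = conv B\<close>, some point of \<open>B\<close> is a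
  zero as well; it is a 0/1 vector whose 1-set cuts exactly the negative edges. Replacing
  \<open>a\<close> by \<open>-a\<close> handles the positive edges.
\<close>

section \<open>Edge cuts and even cycles\<close>

definition cut_by :: "'n set set \<Rightarrow> ('n set \<Rightarrow> bool) \<Rightarrow> ('n \<Rightarrow> bool) \<Rightarrow> bool" where
  "cut_by E l \<sigma> \<longleftrightarrow> (\<forall>e\<in>E. \<forall>i\<in>e. \<forall>j\<in>e. i \<noteq> j \<longrightarrow> (\<sigma> i \<noteq> \<sigma> j \<longleftrightarrow> l e))"

lemma cut_by_edge: "cut_by E l \<sigma> \<Longrightarrow> {i, j} \<in> E \<Longrightarrow> i \<noteq> j \<Longrightarrow> \<sigma> i \<noteq> \<sigma> j \<longleftrightarrow> l {i, j}"
  by (auto simp: cut_by_def)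

lemma even_card_changes_iff:
  fixes g :: "nat \<Rightarrow> bool"
  shows "even (card {i. i < k \<and> g i \<noteq> g (Suc i)}) \<longleftrightarrow> (g k \<longleftrightarrow> g 0)"
proof (induction k)
  case (Suc k)
  have "{i. i < Suc k \<and> g i \<noteq> g (Suc i)} =
      (if g k \<noteq> g (Suc k) then insert k else id) {i. i < k \<and> g i \<noteq> g (Suc i)}"
    by (auto simp: less_Suc_eq)
  with Suc.IH show ?case by auto
qed simp

definition cycle_edge :: "'n list \<Rightarrow> nat \<Rightarrow> 'n set" where
  "cycle_edge vs i = {vs ! i, vs ! (Suc i mod length vs)}"

lemma cycle_edges_eq_image: "cycle_edges vs = cycle_edge vs ` {..<length vs}"
  by (auto simp: cycle_edges_def cycle_edge_def)

lemma inj_on_cycle_edge: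
  assumes "is_cycle E vs"
  shows "inj_on (cycle_edge vs) {..<length vs}"
proof
  fix i j assume i: "i \<in> {..<length vs}" and j: "j \<in> {..<length vs}"
    and eq: "cycle_edge vs i = cycle_edge vs j"
  let ?L = "length vs"
  have L: "3 \<le> ?L" and d: "distinct vs" using assms by (auto simp: is_cycle_def)
  have "0 < ?L" using L by linarith
  then have i': "Suc i mod ?L < ?L" and j': "Suc j mod ?L < ?L" by simp_all
  from eq have "vs!i = vs!j \<and> vs!(Suc i mod ?L) = vs!(Suc j mod ?L) \<or>
      vs!i = vs!(Suc j mod ?L) \<and> vs!(Suc i mod ?L) = vs!j"
    by (simp add: cycle_edge_def doubleton_eq_iff)
  then have "i = j \<or> i = Suc j mod ?L \<and> Suc i mod ?L = j"
    using nth_eq_iff_index_eq[OF d] i j i' j' by auto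
  moreover have "\<not> (i = Suc j mod ?L \<and> Suc i mod ?L = j)"
    using L i j by (auto simp: mod_Suc split: if_splits)
  ultimately show "i = j" by blast
qed

lemma card_cycle_edges_filter:
  assumes "is_cycle E vs"
  shows "card {e \<in> cycle_edges vs. P e} = card {i. i < length vs \<and> P (cycle_edge vs i)}"
proof -
  have "{e \<in> cycle_edges vs. P e} = cycle_edge vs ` {i. i < length vs \<and> P (cycle_edge vs i)}"
    by (auto simp: cycle_edges_eq_image)
  moreover have "inj_on (cycle_edge vs) {i. i < length vs \<and> P (cycle_edge vs i)}"
    using inj_on_cycle_edge[OF assms] by (rule inj_on_subset) auto
  ultimately show ?thesis by (simp add: card_image)
qed

lemma even_cycle_count_if_cut_by:
  assumes cut: "cut_by E l \<sigma>" and cyc: "is_cycle E vs"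
  shows "even (card {e \<in> cycle_edges vs. l e})"
proof -
  let ?L = "length vs"
  have L: "3 \<le> ?L" and d: "distinct vs" using cyc by (auto simp: is_cycle_def)
  have "l (cycle_edge vs i) \<longleftrightarrow> \<sigma> (vs ! (i mod ?L)) \<noteq> \<sigma> (vs ! (Suc i mod ?L))" if "i < ?L" for i
  proof -
    have "cycle_edge vs i \<in> E" using cyc that by (simp add: is_cycle_def cycle_edge_def)
    moreover have "vs ! i \<noteq> vs ! (Suc i mod ?L)"
    proof -
      have "Suc i mod ?L < ?L" "Suc i mod ?L \<noteq> i" using that L by (auto simp: mod_Suc)
      then show ?thesis using that by (simp add: nth_eq_iff_index_eq[OF d])
    qed
    ultimately show ?thesis using cut that by (auto simp: cut_by_def cycle_edge_def)
  qed
  then have "{i. i < ?L \<and> l (cycle_edge vs i)} =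
      {i. i < ?L \<and> \<sigma> (vs ! (i mod ?L)) \<noteq> \<sigma> (vs ! (Suc i mod ?L))}" by blast
  then show ?thesis
    using even_card_changes_iff[of ?L "\<lambda>i. \<sigma> (vs ! (i mod ?L))"]
    by (simp add: card_cycle_edges_filter[OF cyc])
qed

lemma is_cycle_mono: "is_cycle E vs \<Longrightarrow> E \<subseteq> F \<Longrightarrow> is_cycle F vs"
  by (auto simp: is_cycle_def)

lemma cycle_edge_Suc: "Suc i < length vs \<Longrightarrow> cycle_edge vs i = {vs ! i, vs ! Suc i}"
  by (simp add: cycle_edge_def)

lemma cycle_edge_last: "length vs = Suc n \<Longrightarrow> cycle_edge vs n = {vs ! n, vs ! 0}"
  by (simp add: cycle_edge_def)

lemma is_cycle_close_path:
  assumes xs: "rtrancl_path (\<lambda>p q. {p, q} \<in> F) u xs v" and d: "distinct (u # xs)"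
    and new: "{u, v} \<notin> F" and "u \<noteq> v"
  shows "is_cycle (insert {u, v} F) (u # xs)"
proof -
  have step: "cycle_edge (u # xs) i \<in> F" if "i < length xs" for i
    using rtrancl_path_nth[OF xs that] that by (simp add: cycle_edge_Suc)
  have "xs \<noteq> []" using xs \<open>u \<noteq> v\<close> by (auto elim: rtrancl_path.cases)
  then have "(u # xs) ! length xs = v"
    using rtrancl_path_last[OF xs] by (simp add: last_conv_nth)
  then have closing: "cycle_edge (u # xs) (length xs) = {u, v}"
    by (simp add: cycle_edge_last insert_commute)
  have "length xs \<noteq> 1"
  proof
    assume "length xs = 1"
    then show False using step[of 0] closing new by (simp add: cycle_edge_def insert_commute)
  qed
  moreover have "length xs \<noteq> 0" using \<open>xs \<noteq> []\<close> by simp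
  ultimately have long: "3 \<le> length (u # xs)" by (simp only: length_Cons)
  have "cycle_edge (u # xs) i \<in> insert {u, v} F" if "i < length (u # xs)" for i
    using step closing that less_Suc_eq by auto
  then show ?thesis using d long by (simp add: is_cycle_def cycle_edge_def)
qed

lemma cut_by_closing_edge:
  assumes cut: "cut_by F l \<sigma>" and new: "{u, v} \<notin> F" and "u \<noteq> v"
    and path: "(\<lambda>p q. {p, q} \<in> F)\<^sup>*\<^sup>* u v"
    and even: "\<forall>vs. is_cycle (insert {u, v} F) vs \<longrightarrow> even (card {e \<in> cycle_edges vs. l e})"
  shows "\<sigma> u \<noteq> \<sigma> v \<longleftrightarrow> l {u, v}"
proof -
  obtain xs where xs: "rtrancl_path (\<lambda>p q. {p, q} \<in> F) u xs v" and d: "distinct (u # xs)"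
    using path rtrancl_path_distinct by (metis rtranclp_eq_rtrancl_path)
  define ps where "ps = u # xs"
  define L where "L = length xs"
  have cyc: "is_cycle (insert {u, v} F) ps"
    unfolding ps_def by (rule is_cycle_close_path[OF xs d new \<open>u \<noteq> v\<close>])
  have "xs \<noteq> []" using xs \<open>u \<noteq> v\<close> by (auto elim: rtrancl_path.cases)
  then have last: "ps ! L = v" using rtrancl_path_last[OF xs] by (simp add: ps_def L_def last_conv_nth)
  have change: "l (cycle_edge ps i) \<longleftrightarrow> \<sigma> (ps ! i) \<noteq> \<sigma> (ps ! Suc i)" if "i < L" for i
  proof -
    have "{ps ! i, ps ! Suc i} \<in> F" using rtrancl_path_nth[OF xs] that by (simp add: ps_def L_def)
    moreover have "distinct ps" "Suc i < length ps" using d that by (simp_all add: ps_def L_def)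
    then have "ps ! i \<noteq> ps ! Suc i" by (simp add: nth_eq_iff_index_eq)
    ultimately show ?thesis using cut_by_edge[OF cut] that by (simp add: cycle_edge_Suc ps_def L_def)
  qed
  have count: "{i. i < Suc L \<and> l (cycle_edge ps i)} =
      (if l {u, v} then insert L else id) {i. i < L \<and> \<sigma> (ps ! i) \<noteq> \<sigma> (ps ! Suc i)}"
    using change last cycle_edge_last[of ps L] by (auto simp: ps_def L_def less_Suc_eq insert_commute)
  have "even (card {e \<in> cycle_edges ps. l e})" using even cyc by blast
  then have "even (card {i. i < Suc L \<and> l (cycle_edge ps i)})"
    using card_cycle_edges_filter[OF cyc, of l] by (simp add: ps_def L_def)
  then show ?thesis
    unfolding count using even_card_changes_iff[of L "\<lambda>i. \<sigma> (ps ! i)"] last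
    by (auto simp: ps_def split: if_splits)
qed

lemma cut_by_insert_edge:
  assumes cut: "cut_by F l \<sigma>" and new: "{u, v} \<notin> F" and "u \<noteq> v"
    and simple: "simple_graph F"
    and even: "\<forall>vs. is_cycle (insert {u, v} F) vs \<longrightarrow> even (card {e \<in> cycle_edges vs. l e})"
  shows "\<exists>\<sigma>'. cut_by (insert {u, v} F) l \<sigma>'"
proof (cases "\<sigma> u \<noteq> \<sigma> v \<longleftrightarrow> l {u, v}")
  case True
  then have "cut_by (insert {u, v} F) l \<sigma>"
    using cut by (auto simp: cut_by_def doubleton_eq_iff)
  then show ?thesis by blast
next
  case False
  \<comment> \<open>Then \<open>v\<close> is not reachable from \<open>u\<close> in \<open>F\<close>, and flipping \<open>\<sigma>\<close> on the component of \<open>u\<close> repairs it.\<close>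
  define C where "C w \<longleftrightarrow> (\<lambda>p q. {p, q} \<in> F)\<^sup>*\<^sup>* u w" for w
  have "\<not> C v" using False cut_by_closing_edge[OF cut new \<open>u \<noteq> v\<close> _ even] by (auto simp: C_def)
  have closed: "C p \<longleftrightarrow> C q" if "{p, q} \<in> F" for p q
    using that by (auto simp: C_def insert_commute intro: rtranclp.rtrancl_into_rtrancl)
  have "cut_by (insert {u, v} F) l (\<lambda>w. \<sigma> w \<noteq> C w)"
    unfolding cut_by_def
  proof (intro ballI impI)
    fix e i j assume e: "e \<in> insert {u, v} F" and ij: "i \<in> e" "j \<in> e" "i \<noteq> j"
    show "(\<sigma> i \<noteq> C i) \<noteq> (\<sigma> j \<noteq> C j) \<longleftrightarrow> l e"
    proof (cases "e = {u, v}")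
      case True
      then show ?thesis using ij False \<open>\<not> C v\<close> by (auto simp: C_def)
    next
      case False
      with e have "e \<in> F" by simp
      moreover from this have "e = {i, j}"
        using simple ij by (auto simp: simple_graph_def card_2_iff)
      ultimately show ?thesis
        using cut_by_edge[OF cut] closed ij by auto
    qed
  qed
  then show ?thesis by blast
qed

lemma cut_by_exists_if_even_cycles:
  assumes "finite F" "simple_graph F"
    and "\<forall>vs. is_cycle F vs \<longrightarrow> even (card {e \<in> cycle_edges vs. l e})"
  shows "\<exists>\<sigma>. cut_by F l \<sigma>"
  using assms
proof (induction F rule: finite_induct)
  case empty
  show ?case by (simp add: cut_by_def)
next
  case (insert e F)
  obtain u v where e: "e = {u, v}" "u \<noteq> v"
    using insert.prems(1) by (auto simp: simple_graph_def card_2_iff)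
  have "simple_graph F" using insert.prems(1) by (simp add: simple_graph_def)
  moreover have "\<forall>vs. is_cycle F vs \<longrightarrow> even (card {e \<in> cycle_edges vs. l e})"
    using insert.prems(2) is_cycle_mono by blast
  ultimately obtain \<sigma> where "cut_by F l \<sigma>" using insert.IH by blast
  then show ?case
    using cut_by_insert_edge \<open>simple_graph F\<close> insert.hyps(2) insert.prems(2) e by blast
qed

theorem cut_by_iff_even_cycles:
  fixes E :: "('n::finite) set set"
  assumes "simple_graph E"
  shows "(\<exists>\<sigma>. cut_by E l \<sigma>) \<longleftrightarrow> (\<forall>vs. is_cycle E vs \<longrightarrow> even (card {e \<in> cycle_edges vs. l e}))"
  using cut_by_exists_if_even_cycles[OF _ assms] even_cycle_count_if_cut_by by auto

section \<open>The relaxation contains the convex hull\<close>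

lemma convex_mccormickQ:
  fixes E :: "('n::finite) set set"
  shows "convex (mccormickQ E a)"
proof (rule convexI)
  fix p q :: "(real^'n) \<times> real" and s t :: real
  assume p: "p \<in> mccormickQ E a" and q: "q \<in> mccormickQ E a"
    and st: "0 \<le> s" "0 \<le> t" "s + t = 1"
  obtain x1 y1 x2 y2 where pq: "p = (x1, \<Sum>e\<in>E. a e * y1 e)" "q = (x2, \<Sum>e\<in>E. a e * y2 e)"
    and P: "(x1, y1) \<in> mccormickP E" "(x2, y2) \<in> mccormickP E"
    using p q by (auto simp: mccormickQ_def)
  have comb: "s * a1 + t * a2 \<le> s * b1 + t * b2" if "a1 \<le> b1" "a2 \<le> b2" for a1 a2 b1 b2 :: real
    using st that by (intro add_mono mult_left_mono) auto
  have const: "s * c + t * c = c" for c :: real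
    using st by (metis distrib_right mult_1)
  have sum2: "s * u + t * w + (s * u' + t * w') - 1 = s * (u + u' - 1) + t * (w + w' - 1)"
    for u w u' w' :: real
    using const[of 1] by (simp add: algebra_simps)
  define x where "x = s *\<^sub>R x1 + t *\<^sub>R x2"
  define y where "y e = s * y1 e + t * y2 e" for e
  have "(x, y) \<in> mccormickP E"
    using P unfolding mccormickP_def unit_box_def x_def y_def
    by (auto simp: sum2 intro: comb comb[of 0 _ 0, simplified] comb[of _ 1 _ 1, unfolded const])
  then show "s *\<^sub>R p + t *\<^sub>R q \<in> mccormickQ E a"
    by (auto simp: mccormickQ_def mccormickP_def pq x_def y_def sum.distrib sum_distrib_left algebra_simps)
qed

lemma mult_unit_interval_bounds:
  fixes u v :: real
  assumes "0 \<le> u" "u \<le> 1" "0 \<le> v" "v \<le> 1"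
  shows "0 \<le> u * v" "u * v \<le> u" "u * v \<le> v" "u + v - 1 \<le> u * v"
proof -
  show "0 \<le> u * v" "u * v \<le> u" "u * v \<le> v"
    using assms by (simp_all add: mult_left_le mult_left_le_one_le)
  have "0 \<le> (1 - u) * (1 - v)" using assms by simp
  then show "u + v - 1 \<le> u * v" by (simp add: algebra_simps)
qed

lemma edge_pair: "simple_graph E \<Longrightarrow> e \<in> E \<Longrightarrow> \<exists>i j. e = {i, j} \<and> i \<noteq> j"
  by (simp add: simple_graph_def card_2_iff)

lemma graphB_subset_mccormickQ:
  assumes "simple_graph E"
  shows "graphB E a \<subseteq> mccormickQ E a"
proof
  fix p assume "p \<in> graphB E a"
  then obtain x where x: "x \<in> unit_box" and p: "p = (x, bilin E a x)"
    by (auto simp: graphB_def)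
  have "(x, \<lambda>e. \<Prod>i\<in>e. x$i) \<in> mccormickP E"
    unfolding mccormickP_def
  proof (clarsimp simp: x)
    fix e assume "e \<in> E"
    then obtain i j where e: "e = {i, j}" "i \<noteq> j" using edge_pair[OF assms] by blast
    have "0 \<le> x$k \<and> x$k \<le> 1" for k using x by (simp add: unit_box_def)
    with e show "0 \<le> (\<Prod>i\<in>e. x$i) \<and> (\<Prod>i\<in>e. x$i) \<le> 1 \<and> (\<forall>k\<in>e. (\<Prod>i\<in>e. x$i) \<le> x$k) \<and>
        (\<forall>k\<in>e. \<forall>l\<in>e. k \<noteq> l \<longrightarrow> x$k + x$l - 1 \<le> (\<Prod>i\<in>e. x$i))"
      using mult_unit_interval_bounds[of "x$i" "x$j"] by (auto simp: add.commute mult_le_one)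
  qed
  then show "p \<in> mccormickQ E a"
    using x by (auto simp: mccormickQ_def p bilin_def)
qed

lemma convex_hull_graphB_subset_mccormickQ:
  fixes E :: "('n::finite) set set"
  assumes "simple_graph E"
  shows "convex hull graphB E a \<subseteq> mccormickQ E a"
  using graphB_subset_mccormickQ[OF assms] convex_mccormickQ by (rule hull_minimal)

section \<open>Threshold rounding\<close>

lemma sum_gaps_upto:
  fixes ts :: "real list"
  assumes ts: "sorted_wrt (<) ts" and j: "j < length ts"
  shows "(\<Sum>k<length ts - 1. (ts ! Suc k - ts ! k) * of_bool (ts ! Suc k \<le> ts ! j)) = ts ! j - ts ! 0"
proof -
  have "ts ! Suc k \<le> ts ! j \<longleftrightarrow> k < j" if "k < length ts - 1" for k
  proof
    show "k < j \<Longrightarrow> ts ! Suc k \<le> ts ! j"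
      using sorted_nth_mono[OF strict_sorted_imp_sorted[OF ts]] j by simp
    show "k < j" if "ts ! Suc k \<le> ts ! j"
    proof (rule ccontr)
      assume "\<not> k < j"
      then have "ts ! j < ts ! Suc k"
        using sorted_wrt_nth_less[OF ts, of j "Suc k"] \<open>k < length ts - 1\<close> by simp
      with that show False by simp
    qed
  qed
  then have "(\<Sum>k<length ts - 1. (ts ! Suc k - ts ! k) * of_bool (ts ! Suc k \<le> ts ! j))
      = (\<Sum>k<length ts - 1. if k < j then ts ! Suc k - ts ! k else 0)"
    by (intro sum.cong) auto
  also have "\<dots> = (\<Sum>k\<in>{..<length ts - 1} \<inter> {..<j}. ts ! Suc k - ts ! k)"
    by (simp add: sum.inter_restrict)
  also have "{..<length ts - 1} \<inter> {..<j} = {..<j}" using j by auto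
  finally show ?thesis by (simp add: sum_lessThan_telescope)
qed

text \<open>A finite form of \<open>c = \<integral>\<^sub>0\<^sup>1 [t \<le> c] dt\<close>.\<close>

lemma threshold_decomposition:
  fixes X :: "real set"
  assumes "finite X" "X \<subseteq> {0..1}"
  obtains n and w \<theta> :: "nat \<Rightarrow> real"
  where "\<forall>k<n. 0 \<le> w k" "(\<Sum>k<n. w k) = 1" "\<forall>c\<in>X. (\<Sum>k<n. w k * of_bool (\<theta> k \<le> c)) = c"
proof -
  define A where "A = insert 0 (insert 1 X)"
  define ts where "ts = sorted_list_of_set A"
  define w where "w k = ts ! Suc k - ts ! k" for k
  have A: "finite A" "A \<subseteq> {0..1}" "A \<noteq> {}" using assms by (auto simp: A_def)
  have ts: "sorted_wrt (<) ts" "set ts = A" using A by (simp_all add: ts_def)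
  have "Min A = 0" using A by (intro Min_eqI) (auto simp: A_def)
  then have "ts ! 0 = 0"
    using sorted_list_of_set_nonempty[OF A(1) A(3)] by (simp add: ts_def)
  have gaps: "(\<Sum>k<length ts - 1. w k * of_bool (ts ! Suc k \<le> c)) = c" if c: "c \<in> A" for c
  proof -
    obtain j where j: "j < length ts" "c = ts ! j" using c ts(2) by (auto simp: in_set_conv_nth)
    show ?thesis using sum_gaps_upto[OF ts(1) j(1)] \<open>ts ! 0 = 0\<close> by (simp add: w_def j(2))
  qed
  have "\<forall>k<length ts - 1. 0 \<le> w k"
    using sorted_wrt_nth_less[OF ts(1)] by (simp add: w_def less_eq_real_def)
  moreover have "ts ! Suc k \<le> 1" if "k < length ts - 1" for k
  proof -
    have "ts ! Suc k \<in> A" using that ts(2) nth_mem[of "Suc k" ts] by simp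
    then show ?thesis using A(2) by auto
  qed
  then have "(\<Sum>k<length ts - 1. w k) = 1"
    using gaps[of 1] by (simp add: A_def)
  moreover have "\<forall>c\<in>X. (\<Sum>k<length ts - 1. w k * of_bool (ts ! Suc k \<le> c)) = c"
    using gaps by (simp add: A_def)
  ultimately show thesis by (rule that)
qed

text \<open>
  For a threshold \<open>t\<close> uniform in \<open>[0, 1]\<close>, both \<open>[t \<le> x\<^sub>i]\<close> and \<open>1 - [t \<le> 1 - x\<^sub>i]\<close> have
  mean \<open>x\<^sub>i\<close>; the product of two coordinates has mean \<open>min x\<^sub>i x\<^sub>j\<close> if both are rounded in the
  same direction and \<open>max 0 (x\<^sub>i + x\<^sub>j - 1)\<close> otherwise.
\<close>

definition switched_rounding :: "('n \<Rightarrow> bool) \<Rightarrow> real^('n::finite) \<Rightarrow> real \<Rightarrow> real^'n" where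
  "switched_rounding \<sigma> x t = (\<chi> i. if \<sigma> i then of_bool (t \<le> x$i) else 1 - of_bool (t \<le> 1 - x$i))"

lemma switched_rounding_in_unit_box: "switched_rounding \<sigma> x t \<in> unit_box"
  by (simp add: unit_box_def switched_rounding_def)

lemma switched_rounding_moments:
  fixes x :: "real^'n::finite" and n :: nat and w \<theta> :: "nat \<Rightarrow> real"
  defines "M f \<equiv> \<Sum>k<n. w k * f k"
  assumes total: "(\<Sum>k<n. w k) = 1"
    and mean: "\<And>c. c \<in> range (\<lambda>i. x$i) \<union> range (\<lambda>i. 1 - x$i) \<Longrightarrow> M (\<lambda>k. of_bool (\<theta> k \<le> c)) = c"
  shows "M (\<lambda>k. switched_rounding \<sigma> x (\<theta> k) $ i) = x$i"
    and "M (\<lambda>k. switched_rounding \<sigma> x (\<theta> k) $ i * switched_rounding \<sigma> x (\<theta> k) $ j) =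
      (if \<sigma> i = \<sigma> j then min (x$i) (x$j) else max 0 (x$i + x$j - 1))"
proof -
  define I where "I c = (\<lambda>k. of_bool (\<theta> k \<le> c) :: real)" for c
  have v: "switched_rounding \<sigma> x (\<theta> k) $ i = (if \<sigma> i then I (x$i) k else 1 - I (1 - x$i) k)" for k i
    by (simp add: switched_rounding_def I_def)
  have M_I: "M (I (x$i)) = x$i" "M (I (1 - x$i)) = 1 - x$i" for i
    using mean[of "x$i"] mean[of "1 - x$i"] by (simp_all add: I_def)
  have M_min: "M (\<lambda>k. I c k * I d k) = min c d" if "M (I c) = c" "M (I d) = d" for c d
  proof -
    have "I c k * I d k = I (min c d) k" for k by (simp add: I_def)
    then show ?thesis using that by (simp add: min_def)
  qed
  have M_diff: "M (\<lambda>k. f k - g k) = M f - M g" for f g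
    by (simp add: M_def algebra_simps sum_subtractf)
  have M_compl: "M (\<lambda>k. 1 - f k) = 1 - M f" for f
    using total M_diff[of "\<lambda>_. 1" f] by (simp add: M_def)
  show "M (\<lambda>k. switched_rounding \<sigma> x (\<theta> k) $ i) = x$i"
    using M_I M_compl[of "I (1 - x$i)"] by (cases "\<sigma> i") (simp_all add: v)
  show "M (\<lambda>k. switched_rounding \<sigma> x (\<theta> k) $ i * switched_rounding \<sigma> x (\<theta> k) $ j) =
      (if \<sigma> i = \<sigma> j then min (x$i) (x$j) else max 0 (x$i + x$j - 1))"
  proof (cases "\<sigma> i"; cases "\<sigma> j")
    assume "\<sigma> i" "\<sigma> j"
    then show ?thesis using M_min[OF M_I(1) M_I(1)] by (simp add: v)
  next
    assume "\<sigma> i" "\<not> \<sigma> j"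
    then have "(\<lambda>k. switched_rounding \<sigma> x (\<theta> k) $ i * switched_rounding \<sigma> x (\<theta> k) $ j) =
        (\<lambda>k. I (x$i) k - I (x$i) k * I (1 - x$j) k)"
      by (simp add: v algebra_simps)
    then show ?thesis
      using \<open>\<sigma> i\<close> \<open>\<not> \<sigma> j\<close> M_diff M_I M_min[OF M_I(1) M_I(2)] by (simp add: min_def max_def)
  next
    assume "\<not> \<sigma> i" "\<sigma> j"
    then have "(\<lambda>k. switched_rounding \<sigma> x (\<theta> k) $ i * switched_rounding \<sigma> x (\<theta> k) $ j) =
        (\<lambda>k. I (x$j) k - I (x$j) k * I (1 - x$i) k)"
      by (simp add: v algebra_simps)
    then show ?thesis
      using \<open>\<not> \<sigma> i\<close> \<open>\<sigma> j\<close> M_diff M_I M_min[OF M_I(1) M_I(2)] by (simp add: min_def max_def)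
  next
    assume "\<not> \<sigma> i" "\<not> \<sigma> j"
    then have "(\<lambda>k. switched_rounding \<sigma> x (\<theta> k) $ i * switched_rounding \<sigma> x (\<theta> k) $ j) =
        (\<lambda>k. 1 - (I (1 - x$i) k - (I (1 - x$i) k * I (1 - x$j) k - I (1 - x$j) k)))"
      by (simp add: v algebra_simps)
    then show ?thesis
      using \<open>\<not> \<sigma> i\<close> \<open>\<not> \<sigma> j\<close> M_compl M_diff M_I M_min[OF M_I(2) M_I(2)]
      by (simp add: min_def max_def)
  qed
qed

definition mccormick_bound :: "('n \<Rightarrow> bool) \<Rightarrow> real^('n::finite) \<Rightarrow> 'n set \<Rightarrow> real" where
  "mccormick_bound \<sigma> x e = (if \<forall>i\<in>e. \<forall>j\<in>e. \<sigma> i = \<sigma> j then Min ((\<lambda>i. x$i) ` e)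
     else max 0 ((\<Sum>i\<in>e. x$i) - 1))"

lemma mccormick_bound_pair:
  "i \<noteq> j \<Longrightarrow> mccormick_bound \<sigma> x {i, j} =
    (if \<sigma> i = \<sigma> j then min (x$i) (x$j) else max 0 (x$i + x$j - 1))"
  by (auto simp: mccormick_bound_def)

lemma mccormick_bound_in_convex_hull:
  fixes x :: "real^'n::finite"
  assumes "simple_graph E" and x: "x \<in> unit_box"
  shows "(x, \<Sum>e\<in>E. a e * mccormick_bound \<sigma> x e) \<in> convex hull graphB E a"
proof -
  define X where "X = range (\<lambda>i. x$i) \<union> range (\<lambda>i. 1 - x$i)"
  have "finite X" "X \<subseteq> {0..1}" using x by (auto simp: X_def unit_box_def)
  then obtain n :: nat and w \<theta> :: "nat \<Rightarrow> real" where w: "\<forall>k<n. 0 \<le> w k" "(\<Sum>k<n. w k) = 1"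
    and mean: "\<forall>c\<in>X. (\<Sum>k<n. w k * of_bool (\<theta> k \<le> c)) = c"
    by (rule threshold_decomposition)
  define v where "v k = switched_rounding \<sigma> x (\<theta> k)" for k
  note moments = switched_rounding_moments[where n=n and w=w and \<theta>=\<theta> and x=x and \<sigma>=\<sigma>,
      folded v_def, OF w(2)]
  have edge_moment: "(\<Sum>k<n. w k * (\<Prod>i\<in>e. v k $ i)) = mccormick_bound \<sigma> x e" if "e \<in> E" for e
    using edge_pair[OF assms(1) that] moments(2) mean by (auto simp: X_def mccormick_bound_pair)
  have "(\<Sum>k<n. w k * bilin E a (v k)) = (\<Sum>e\<in>E. a e * (\<Sum>k<n. w k * (\<Prod>i\<in>e. v k $ i)))"
    unfolding bilin_def by (simp add: sum_distrib_left sum.swap[of _ "{..<n}"] algebra_simps)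
  also have "\<dots> = (\<Sum>e\<in>E. a e * mccormick_bound \<sigma> x e)"
    using edge_moment by simp
  finally have "(\<Sum>k<n. w k *\<^sub>R (v k, bilin E a (v k))) = (x, \<Sum>e\<in>E. a e * mccormick_bound \<sigma> x e)"
    using moments(1) mean by (simp add: prod_eq_iff fst_sum snd_sum vec_eq_iff sum_component X_def)
  moreover have "(\<Sum>k<n. w k *\<^sub>R (v k, bilin E a (v k))) \<in> convex hull graphB E a"
    using w switched_rounding_in_unit_box
    by (intro convex_sum convex_convex_hull hull_inc) (auto simp: graphB_def v_def)
  ultimately show ?thesis by simp
qed

section \<open>Sufficiency of the cut conditions\<close>

lemma convex_vertical_segment:
  fixes C :: "('a::real_vector \<times> real) set"
  assumes "convex C" "(x, z1) \<in> C" "(x, z2) \<in> C" "z1 \<le> z" "z \<le> z2"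
  shows "(x, z) \<in> C"
proof (cases "z1 = z2")
  case True
  then show ?thesis using assms by simp
next
  case False
  define u where "u = (z - z1) / (z2 - z1)"
  have "0 \<le> u" "u \<le> 1" using assms False by (auto simp: u_def field_simps)
  moreover have "z2 - z1 \<noteq> 0" using False by simp
  then have "u * (z2 - z1) = z - z1" by (simp add: u_def)
  then have "(1 - u) * z1 + u * z2 = z" by (simp add: algebra_simps)
  then have "(x, z) = (1 - u) *\<^sub>R (x, z1) + u *\<^sub>R (x, z2)"
    by (simp add: scaleR_left_diff_distrib)
  ultimately show ?thesis using assms(1-3) by (metis convexD_alt)
qed

lemma mccormick_objective_bounds:
  assumes "simple_graph E" and nz: "\<forall>e\<in>E. a e \<noteq> 0"
    and \<sigma>: "cut_by E (\<lambda>e. a e < 0) \<sigma>" and \<tau>: "cut_by E (\<lambda>e. 0 < a e) \<tau>"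
    and P: "(x, y) \<in> mccormickP E"
  shows "(\<Sum>e\<in>E. a e * mccormick_bound \<tau> x e) \<le> (\<Sum>e\<in>E. a e * y e)"
    and "(\<Sum>e\<in>E. a e * y e) \<le> (\<Sum>e\<in>E. a e * mccormick_bound \<sigma> x e)"
proof -
  have "a e * mccormick_bound \<tau> x e \<le> a e * y e \<and> a e * y e \<le> a e * mccormick_bound \<sigma> x e"
    if e: "e \<in> E" for e
  proof -
    obtain i j where ij: "e = {i, j}" "i \<noteq> j" using edge_pair[OF assms(1) e] by blast
    have y: "max 0 (x$i + x$j - 1) \<le> y e" "y e \<le> min (x$i) (x$j)"
      using P e ij by (auto simp: mccormickP_def)
    have "\<sigma> i = \<sigma> j \<longleftrightarrow> \<not> a e < 0" "\<tau> i = \<tau> j \<longleftrightarrow> \<not> 0 < a e"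
      using cut_by_edge[OF \<sigma>] cut_by_edge[OF \<tau>] e ij by auto
    moreover have "a e < 0 \<or> 0 < a e" using nz e by (meson linorder_neqE)
    ultimately show ?thesis
      using y ij by (auto simp: mccormick_bound_pair mult_left_mono mult_left_mono_neg)
  qed
  then show "(\<Sum>e\<in>E. a e * mccormick_bound \<tau> x e) \<le> (\<Sum>e\<in>E. a e * y e)"
    and "(\<Sum>e\<in>E. a e * y e) \<le> (\<Sum>e\<in>E. a e * mccormick_bound \<sigma> x e)"
    by (auto intro: sum_mono)
qed

lemma mccormickQ_subset_convex_hull:
  assumes "simple_graph E" "\<forall>e\<in>E. a e \<noteq> 0"
    and "cut_by E (\<lambda>e. a e < 0) \<sigma>" "cut_by E (\<lambda>e. 0 < a e) \<tau>"
  shows "mccormickQ E a \<subseteq> convex hull graphB E a"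
proof
  fix p assume "p \<in> mccormickQ E a"
  then obtain x y where p: "p = (x, \<Sum>e\<in>E. a e * y e)" and x: "x \<in> unit_box"
    and P: "(x, y) \<in> mccormickP E"
    by (auto simp: mccormickQ_def)
  show "p \<in> convex hull graphB E a"
    unfolding p
    by (rule convex_vertical_segment[OF convex_convex_hull
          mccormick_bound_in_convex_hull[OF assms(1) x] mccormick_bound_in_convex_hull[OF assms(1) x]
          mccormick_objective_bounds[OF assms P]])
qed

section \<open>Necessity of the cut conditions\<close>

lemma convex_hull_attains_linear_min:
  fixes f :: "'a::real_vector \<Rightarrow> real"
  assumes "linear f" "\<forall>p\<in>B. c \<le> f p" "q \<in> convex hull B" "f q = c"
  shows "\<exists>p\<in>B. f p = c"
proof (rule ccontr)
  assume "\<not> (\<exists>p\<in>B. f p = c)"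
  with assms(2) have "B \<subseteq> f -` {c<..}" by fastforce
  moreover have "convex (f -` {c<..})" using assms(1) by (simp add: convex_linear_vimage)
  ultimately have "convex hull B \<subseteq> f -` {c<..}" by (rule hull_minimal)
  with assms(3,4) show False by auto
qed

lemma product_slack:
  fixes c u v :: real
  assumes "0 \<le> u" "u \<le> 1" "0 \<le> v" "v \<le> 1"
  defines "s \<equiv> c / 2 * (u + v) - c * (u * v) - (if c < 0 then c / 2 else 0)"
  shows "0 \<le> s" and "s = 0 \<Longrightarrow> c \<noteq> 0 \<Longrightarrow> (u = 1 \<longleftrightarrow> v = 1) \<longleftrightarrow> 0 < c"
proof -
  have uv: "0 \<le> u * (1 - v)" "0 \<le> v * (1 - u)" "0 \<le> u * v" "0 \<le> (1 - u) * (1 - v)"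
    using assms by simp_all
  consider "c < 0" "s = - c / 2 * (u * v + (1 - u) * (1 - v))"
    | "\<not> c < 0" "s = c / 2 * (u * (1 - v) + v * (1 - u))"
    by (cases "c < 0") (simp_all add: s_def algebra_simps)
  note cases = this
  show "0 \<le> s"
  proof (cases rule: cases)
    case 1
    show ?thesis unfolding 1(2) using uv 1(1) by (intro mult_nonneg_nonneg) auto
  next
    case 2
    show ?thesis unfolding 2(2) using uv 2(1) by (intro mult_nonneg_nonneg) auto
  qed
  show "(u = 1 \<longleftrightarrow> v = 1) \<longleftrightarrow> 0 < c" if "s = 0" "c \<noteq> 0"
  proof (cases rule: cases)
    case 1
    then have "u * v + (1 - u) * (1 - v) = 0" using that by simp
    then have "u * v = 0" "(1 - u) * (1 - v) = 0" using uv by linarith+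
    then show ?thesis using 1 by auto
  next
    case 2
    then have "u * (1 - v) + v * (1 - u) = 0" using that by simp
    then have "u * (1 - v) = 0" "v * (1 - u) = 0" using uv by linarith+
    then show ?thesis using 2 that by auto
  qed
qed

lemma half_point_in_mccormickQ:
  fixes E :: "('n::finite) set set"
  shows "((\<chi> i. 1 / 2) :: real^'n, \<Sum>e\<in>E. if a e < 0 then 0 else a e / 2) \<in> mccormickQ E a"
proof -
  have "((\<chi> i. 1 / 2) :: real^'n, \<lambda>e. if a e < 0 then 0 else 1 / 2) \<in> mccormickP E"
    by (simp add: mccormickP_def unit_box_def)
  moreover have "(\<Sum>e\<in>E. if a e < 0 then 0 else a e / 2) = (\<Sum>e\<in>E. a e * (if a e < 0 then 0 else 1 / 2))"
    by (intro sum.cong) auto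
  ultimately show ?thesis by (auto simp: mccormickQ_def mccormickP_def)
qed

text \<open>
  The contribution of the edge \<open>e\<close> to \<open>f (x, b x) - c\<close> for the affine function \<open>f - c\<close> of the
  next proof, which vanishes at the point of \<open>half_point_in_mccormickQ\<close>.
\<close>

definition edge_gap :: "('n set \<Rightarrow> real) \<Rightarrow> real^('n::finite) \<Rightarrow> 'n set \<Rightarrow> real" where
  "edge_gap a x e = a e / 2 * (\<Sum>i\<in>e. x$i) - a e * (\<Prod>i\<in>e. x$i) - (if a e < 0 then a e / 2 else 0)"

lemma edge_gap_pair:
  "e = {i, j} \<Longrightarrow> i \<noteq> j \<Longrightarrow>
    edge_gap a x e = a e / 2 * (x$i + x$j) - a e * (x$i * x$j) - (if a e < 0 then a e / 2 else 0)"
  by (simp add: edge_gap_def)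

lemma edge_gap_nonneg:
  assumes "simple_graph E" "e \<in> E" "x \<in> unit_box"
  shows "0 \<le> edge_gap a x e"
proof -
  obtain i j where "e = {i, j}" "i \<noteq> j" using edge_pair[OF assms(1,2)] by blast
  then show ?thesis
    unfolding edge_gap_pair[OF \<open>e = {i, j}\<close> \<open>i \<noteq> j\<close>]
    using assms(3) by (intro product_slack(1)) (simp_all add: unit_box_def)
qed

lemma zero_gap_point_if_mccormickQ_eq_hull:
  fixes E :: "('n::finite) set set"
  assumes simple: "simple_graph E" and eq: "mccormickQ E a = convex hull graphB E a"
  obtains x where "x \<in> unit_box" "\<forall>e\<in>E. edge_gap a x e = 0"
proof -
  define f :: "(real^'n) \<times> real \<Rightarrow> real"
    where "f p = (\<Sum>e\<in>E. a e / 2 * (\<Sum>i\<in>e. fst p $ i)) - snd p" for p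
  define c where "c = (\<Sum>e\<in>E. if a e < 0 then a e / 2 else 0)"
  have "linear f"
    by (rule linearI) (simp_all add: f_def sum.distrib sum_distrib_left sum_divide_distrib algebra_simps)
  have gap_sum: "f (x, bilin E a x) - c = (\<Sum>e\<in>E. edge_gap a x e)" for x
    by (simp add: f_def c_def edge_gap_def bilin_def sum_subtractf)
  have "c \<le> f (x, bilin E a x)" if "x \<in> unit_box" for x
    using gap_sum[of x] sum_nonneg[of E "edge_gap a x"] edge_gap_nonneg[OF simple _ that] by simp
  then have lower: "\<forall>p\<in>graphB E a. c \<le> f p" by (auto simp: graphB_def)
  have attained: "f ((\<chi> i. 1 / 2), \<Sum>e\<in>E. if a e < 0 then 0 else a e / 2) = c"
  proof -
    have "f ((\<chi> i. 1 / 2), \<Sum>e\<in>E. if a e < 0 then 0 else a e / 2) =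
        (\<Sum>e\<in>E. a e / 2 * (\<Sum>i\<in>e. (\<chi> i. 1 / 2 :: real^'n) $ i) - (if a e < 0 then 0 else a e / 2))"
      by (simp add: f_def sum_subtractf)
    also have "\<dots> = c"
      unfolding c_def by (rule sum.cong) (use simple in \<open>auto simp: simple_graph_def\<close>)
    finally show ?thesis .
  qed
  have "((\<chi> i. 1 / 2), \<Sum>e\<in>E. if a e < 0 then 0 else a e / 2) \<in> convex hull graphB E a"
    using half_point_in_mccormickQ[where E=E and a=a] eq by simp
  then obtain p where "p \<in> graphB E a" "f p = c"
    using convex_hull_attains_linear_min[OF \<open>linear f\<close> lower _ attained] by blast
  then obtain x where x: "x \<in> unit_box" and "f (x, bilin E a x) = c"
    by (auto simp: graphB_def)
  then have "(\<Sum>e\<in>E. edge_gap a x e) = 0" using gap_sum[of x] by simp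
  then have "\<forall>e\<in>E. edge_gap a x e = 0"
    using sum_nonneg_eq_0_iff[of E "edge_gap a x"] edge_gap_nonneg[OF simple _ x] by simp
  with x show thesis by (rule that)
qed

lemma cut_by_negative_if_mccormickQ_eq_hull:
  fixes E :: "('n::finite) set set"
  assumes simple: "simple_graph E" and nz: "\<forall>e\<in>E. a e \<noteq> 0"
    and eq: "mccormickQ E a = convex hull graphB E a"
  shows "\<exists>\<sigma>. cut_by E (\<lambda>e. a e < 0) \<sigma>"
proof -
  obtain x where x: "x \<in> unit_box" and gap: "\<forall>e\<in>E. edge_gap a x e = 0"
    by (rule zero_gap_point_if_mccormickQ_eq_hull[OF simple eq])
  have "cut_by E (\<lambda>e. a e < 0) (\<lambda>w. x$w = 1)"
    unfolding cut_by_def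
  proof (intro ballI impI)
    fix e i j assume e: "e \<in> E" and ij: "i \<in> e" "j \<in> e" "i \<noteq> j"
    then have e_ij: "e = {i, j}" using simple by (auto simp: simple_graph_def card_2_iff)
    have "(x$i = 1 \<longleftrightarrow> x$j = 1) \<longleftrightarrow> 0 < a e"
    proof (rule product_slack(2))
      show "0 \<le> x$i" "x$i \<le> 1" "0 \<le> x$j" "x$j \<le> 1" using x by (simp_all add: unit_box_def)
      show "a e / 2 * (x$i + x$j) - a e * (x$i * x$j) - (if a e < 0 then a e / 2 else 0) = 0"
        using gap e edge_gap_pair[OF e_ij ij(3), of a x] by simp
      show "a e \<noteq> 0" using nz e by blast
    qed
    then show "(x$i = 1) \<noteq> (x$j = 1) \<longleftrightarrow> a e < 0"
      using nz e by (auto simp: neq_iff)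
  qed
  then show ?thesis by blast
qed

lemma mccormickQ_eq_hull_uminus:
  fixes E :: "('n::finite) set set"
  assumes "mccormickQ E a = convex hull graphB E a"
  shows "mccormickQ E (\<lambda>e. - a e) = convex hull graphB E (\<lambda>e. - a e)"
proof -
  define g :: "(real^'n) \<times> real \<Rightarrow> (real^'n) \<times> real" where "g p = (fst p, - snd p)" for p
  have "linear g" by (rule linearI) (simp_all add: g_def)
  have reflect: "S' = g ` S" if "\<And>x z. (x, z) \<in> S' \<longleftrightarrow> (x, - z) \<in> S" for S S'
  proof -
    have mem: "p \<in> S' \<longleftrightarrow> g p \<in> S" for p using that[of "fst p" "snd p"] by (simp add: g_def)
    have inv: "g (g p) = p" for p by (simp add: g_def)
    show ?thesis
    proof (intro equalityI subsetI)
      fix p assume "p \<in> S'"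
      then have "g p \<in> S" using mem by simp
      then show "p \<in> g ` S" using inv[of p] by (metis image_eqI)
    next
      fix p assume "p \<in> g ` S"
      then show "p \<in> S'" using mem inv by auto
    qed
  qed
  have "mccormickQ E (\<lambda>e. - a e) = g ` mccormickQ E a"
    by (rule reflect) (auto simp: mccormickQ_def sum_negf)
  moreover have "graphB E (\<lambda>e. - a e) = g ` graphB E a"
    by (rule reflect) (auto simp: graphB_def bilin_def sum_negf)
  ultimately show ?thesis
    using assms convex_hull_linear_image[OF \<open>linear g\<close>] by simp
qed

lemma mccormickQ_eq_hull_iff_cuts:
  fixes E :: "('n::finite) set set"
  assumes "simple_graph E" "\<forall>e\<in>E. a e \<noteq> 0"
  shows "mccormickQ E a = convex hull graphB E a \<longleftrightarrow>
    (\<exists>\<tau>. cut_by E (\<lambda>e. a e > 0) \<tau>) \<and> (\<exists>\<sigma>. cut_by E (\<lambda>e. a e < 0) \<sigma>)"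
proof
  assume eq: "mccormickQ E a = convex hull graphB E a"
  have "\<forall>e\<in>E. - a e \<noteq> 0" using assms(2) by simp
  then have "\<exists>\<tau>. cut_by E (\<lambda>e. - a e < 0) \<tau>"
    by (rule cut_by_negative_if_mccormickQ_eq_hull[OF assms(1) _ mccormickQ_eq_hull_uminus[OF eq]])
  then show "(\<exists>\<tau>. cut_by E (\<lambda>e. a e > 0) \<tau>) \<and> (\<exists>\<sigma>. cut_by E (\<lambda>e. a e < 0) \<sigma>)"
    using cut_by_negative_if_mccormickQ_eq_hull[OF assms eq] by simp
next
  assume "(\<exists>\<tau>. cut_by E (\<lambda>e. a e > 0) \<tau>) \<and> (\<exists>\<sigma>. cut_by E (\<lambda>e. a e < 0) \<sigma>)"
  then show "mccormickQ E a = convex hull graphB E a"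
    using mccormickQ_subset_convex_hull[OF assms] convex_hull_graphB_subset_mccormickQ[OF assms(1)]
    by blast
qed

theorem theorem4:
  fixes E :: "('n::finite) set set" and a :: "'n set \<Rightarrow> real"
  assumes "simple_graph E"
    and "\<forall>e\<in>E. a e \<noteq> 0"
  shows "mccormickQ E a = convex hull (graphB E a) \<longleftrightarrow>
    (\<forall>vs. is_cycle E vs \<longrightarrow>
       even (card {e \<in> cycle_edges vs. a e > 0}) \<and>
       even (card {e \<in> cycle_edges vs. a e < 0}))"
  using mccormickQ_eq_hull_iff_cuts[OF assms] cut_by_iff_even_cycles[OF assms(1)]
  by (simp add: imp_conjR all_conj_distrib)

end
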